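(* Let $n\ge 13$ and let $CT_n$ be the set of chemical trees on $n$ vertices. For a tree $T$ write $\mathbf m(T)=(m_{3,3}(T),m_{2,3}(T),m_{1,2}(T),m_{1,3}(T),m_{2,2}(T))$. For $1\le i\le 13$ let $A_i$ be the set of trees $T\in CT_n$ with $\Delta(T)\le 3$, $n_3(T)\le 2$ and $\mathbf m(T)$ equal to the following vector: $A_1:(0,0,2,0,n-3)$; $A_2:(0,1,1,2,n-5)$; $A_3:(0,2,2,1,n-6)$; $A_4:(0,3,3,0,n-7)$; $A_5:(0,2,0,4,n-7)$; $A_6:(0,3,1,3,n-8)$; $A_7:(0,4,2,2,n-9)$; $A_8:(1,1,1,3,n-7)$; $A_9:(0,5,3,1,n-10)$; $A_{10}:(1,2,2,2,n-8)$; $A_{11}:(0,6,4,0,n-11)$; $A_{12}:(1,3,3,1,n-9)$; $A_{13}:(1,4,4,0,n-10)$. Let $\Omega(n)$ be the set of trees $T\in CT_n$ having $3$ vertices of degree $3$, $n-8$ vertices of degree $2$ and $5$ vertices of degree $1$, with $m_{1,2}(T)=m_{2,3}(T)=5$, $m_{1,3}(T)=0$, $m_{3,3}(T)=2$, $m_{2,2}(T)=n-13$. Let $T_1\in A_1$, $T_2\in A_4$, $T_3\in A_3$, $T_4\in A_2$, $T_5\in A_{13}$, $T_6\in A_{12}$, $T_7\in A_{11}$, $T_8\in A_{10}$, $T_9\in A_9$, $T_{10}\in A_8$, $T_{11}\in A_7$, $T_{12}\in A_6$, $T_{13}\in A_5$, $T_{14}\in\Omega(n)$, and let $T\in CT_n$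 not belong to $A_1\cup\cdots\cup A_{13}\cup\Omega(n)$. Then $SO_{red}(T_1)<SO_{red}(T_2)<\cdots<SO_{red}(T_{13})<SO_{red}(T_{14})<SO_{red}(T)$.
   Context: All graphs are simple and connected. A chemical graph is a graph with maximum degree at most $4$; a chemical tree is a chemical graph that is a tree. $d_G(u)$ is the degree of $u$, $\Delta(G)$ the maximum degree, $n_i(G)$ the number of vertices of degree $i$, and $m_{i,j}(G)$ the number of edges joining a vertex of degree $i$ to a vertex of degree $j$. The reduced Sombor index is $SO_{red}(G)=\sum_{uv\in E(G)}\sqrt{(d_G(u)-1)^2+(d_G(v)-1)^2}$. *)

theory Defs
  imports Complex_Main
begin

definition simple_graph :: "'a set \<Rightarrow> 'a set set \<Rightarrow> bool" where
  "simple_graph V E \<longleftrightarrow> finite V \<and>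
     (\<forall>e\<in>E. \<exists>u v. e = {u, v} \<and> u \<noteq> v \<and> u \<in> V \<and> v \<in> V)"

definition deg :: "'a set set \<Rightarrow> 'a \<Rightarrow> nat" where
  "deg E v = card {e\<in>E. v \<in> e}"

definition adj :: "'a set set \<Rightarrow> 'a \<Rightarrow> 'a \<Rightarrow> bool" where
  "adj E u v \<longleftrightarrow> {u, v} \<in> E"

definition connected_graph :: "'a set \<Rightarrow> 'a set set \<Rightarrow> bool" where
  "connected_graph V E \<longleftrightarrow> V \<noteq> {} \<and> (\<forall>u\<in>V. \<forall>v\<in>V. (adj E)\<^sup>*\<^sup>* u v)"

definition is_cycle :: "'a set set \<Rightarrow> 'a list \<Rightarrow> bool" where
  "is_cycle E xs \<longleftrightarrow> length xs \<ge> 3 \<and> distinct xs \<and>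
     (\<forall>i. Suc i < length xs \<longrightarrow> adj E (xs ! i) (xs ! Suc i)) \<and>
     adj E (last xs) (hd xs)"

definition is_tree :: "'a set \<Rightarrow> 'a set set \<Rightarrow> bool" where
  "is_tree V E \<longleftrightarrow> simple_graph V E \<and> connected_graph V E \<and>
     \<not> (\<exists>xs. set xs \<subseteq> V \<and> is_cycle E xs)"

definition chemical_tree :: "'a set \<Rightarrow> 'a set set \<Rightarrow> bool" where
  "chemical_tree V E \<longleftrightarrow> is_tree V E \<and> (\<forall>v\<in>V. deg E v \<le> 4)"

definition CT :: "nat \<Rightarrow> ('a set \<times> 'a set set) set" where
  "CT n = {(V, E). chemical_tree V E \<and> card V = n}"

definition nvert :: "'a set \<Rightarrow> 'a set set \<Rightarrow> nat \<Rightarrow> nat" where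
  "nvert V E i = card {v\<in>V. deg E v = i}"

definition medges :: "'a set set \<Rightarrow> nat \<Rightarrow> nat \<Rightarrow> nat" where
  "medges E i j = card {e\<in>E. \<exists>u v. e = {u, v} \<and> deg E u = i \<and> deg E v = j}"

definition maxdeg_le :: "'a set \<Rightarrow> 'a set set \<Rightarrow> nat \<Rightarrow> bool" where
  "maxdeg_le V E k \<longleftrightarrow> (\<forall>v\<in>V. deg E v \<le> k)"

text \<open>Reduced Sombor index; for an edge e = {u,v} the summand is
  sqrt((d(u)-1)^2 + (d(v)-1)^2), written via the max and min of the endpoint degrees.\<close>
definition SO_red :: "'a set \<Rightarrow> 'a set set \<Rightarrow> real" where
  "SO_red V E = (\<Sum>e\<in>E. sqrt ((real (Max (deg E ` e)) - 1)\<^sup>2 + (real (Min (deg E ` e)) - 1)\<^sup>2))"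

definition mvec :: "'a set set \<Rightarrow> nat \<times> nat \<times> nat \<times> nat \<times> nat" where
  "mvec E = (medges E 3 3, medges E 2 3, medges E 1 2, medges E 1 3, medges E 2 2)"

definition avec :: "nat \<Rightarrow> nat \<Rightarrow> nat \<times> nat \<times> nat \<times> nat \<times> nat" where
  "avec n i = [(0,0,2,0,n-3), (0,1,1,2,n-5), (0,2,2,1,n-6), (0,3,3,0,n-7),
               (0,2,0,4,n-7), (0,3,1,3,n-8), (0,4,2,2,n-9), (1,1,1,3,n-7),
               (0,5,3,1,n-10), (1,2,2,2,n-8), (0,6,4,0,n-11), (1,3,3,1,n-9),
               (1,4,4,0,n-10)] ! (i - 1)"

definition Aset :: "nat \<Rightarrow> nat \<Rightarrow> ('a set \<times> 'a set set) set" where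
  "Aset n i = {(V, E). (V, E) \<in> CT n \<and> maxdeg_le V E 3 \<and> nvert V E 3 \<le> 2 \<and>
                       mvec E = avec n i}"

definition Omega :: "nat \<Rightarrow> ('a set \<times> 'a set set) set" where
  "Omega n = {(V, E). (V, E) \<in> CT n \<and> nvert V E 3 = 3 \<and> nvert V E 2 = n - 8 \<and>
                nvert V E 1 = 5 \<and> medges E 1 2 = 5 \<and> medges E 2 3 = 5 \<and>
                medges E 1 3 = 0 \<and> medges E 3 3 = 2 \<and> medges E 2 2 = n - 13}"

end

theory Submission
  imports Defs
begin

(*
  In a chemical tree every edge has a degree class (i, j) with 1 \<le> i \<le> j \<le> 4, and SO_red is the
  linear form \<Sum> m_{i,j} sqrt((i-1)^2 + (j-1)^2) in the class counts. The counts obey linear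
  relations: the handshake identities, n - 1 edges, no edge joining two leaves (n \<ge> 3),
  m_{1,2} \<le> m_{2,3} + m_{2,4} as soon as some degree is at least 3 (in a tree, a proper vertex set
  S meets at least |S| edges; take S = vertices of degree at most 2), and m_{2,2} < n_2 (the
  edges inside a vertex set of a forest are fewer than its vertices).
  Trees of Omega(n) have index 5 + 5 sqrt 5 + (n - 9) sqrt 2. If a tree has a vertex of degree 4,
  or at least three vertices of degree 3, then its index minus this value is an explicit
  nonnegative combination of the relations, positive unless the tree lies in Omega(n).
  Otherwise the m-vector is determined by (n_3, m_{3,3}, m_{1,3}), the relations leave exactly
  thirteen triples, one for each A_i, and the chain is a numerical comparison of closed forms.
*)

lemma rtranclp_exits_set:
  assumes "r\<^sup>*\<^sup>* u v" "u \<in> S" "v \<notin> S"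
  shows "\<exists>a b. r a b \<and> a \<in> S \<and> b \<notin> S"
  using assms by (induction rule: rtranclp_induct) auto

definition is_path :: "'a set set \<Rightarrow> 'a list \<Rightarrow> bool" where
  "is_path E xs \<longleftrightarrow> xs \<noteq> [] \<and> distinct xs \<and>
     (\<forall>i. Suc i < length xs \<longrightarrow> adj E (xs ! i) (xs ! Suc i))"

lemma is_path_snoc:
  assumes "is_path E xs" "c \<notin> set xs" "adj E (last xs) c"
  shows "is_path E (xs @ [c])"
  unfolding is_path_def
proof (intro conjI allI impI)
  show "xs @ [c] \<noteq> []" "distinct (xs @ [c])" using assms(1,2) by (auto simp: is_path_def)
  fix i assume i: "Suc i < length (xs @ [c])"
  show "adj E ((xs @ [c]) ! i) ((xs @ [c]) ! Suc i)"
  proof (cases "Suc i < length xs")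
    case True
    then show ?thesis using assms(1) by (simp add: is_path_def nth_append)
  next
    case False
    then have "i = length xs - 1" using i by simp
    then have "(xs @ [c]) ! i = last xs" "(xs @ [c]) ! Suc i = c"
      using assms(1) by (auto simp: is_path_def nth_append last_conv_nth)
    then show ?thesis using assms(3) by simp
  qed
qed

lemma is_cycle_drop:
  assumes "is_path E xs" "j + 3 \<le> length xs" "adj E (last xs) (xs ! j)"
  shows "is_cycle E (drop j xs)"
  using assms by (auto simp: is_cycle_def is_path_def hd_drop_conv_nth)

lemma exists_maximal_path:
  assumes "finite W" "w \<in> W"
  obtains xs where "is_path E xs" "set xs \<subseteq> W"
    "\<And>c. c \<in> W \<Longrightarrow> adj E (last xs) c \<Longrightarrow> c \<in> set xs"
proof -
  define P where "P xs \<longleftrightarrow> is_path E xs \<and> set xs \<subseteq> W" for xs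
  have "P [w]" using assms(2) by (simp add: P_def is_path_def)
  moreover have "length xs < Suc (card W)" if "P xs" for xs
    using that assms(1) card_mono[of W "set xs"] distinct_card[of xs]
    by (simp add: P_def is_path_def)
  ultimately obtain xs where xs: "P xs" and longest: "\<And>ys. P ys \<Longrightarrow> length ys \<le> length xs"
    using ex_has_greatest_nat[of P "[w]" length] by metis
  have closed: "c \<in> set xs" if "c \<in> W" "adj E (last xs) c" for c
    using longest[of "xs @ [c]"] xs that is_path_snoc[of E xs c] by (force simp: P_def)
  show ?thesis using that xs closed unfolding P_def by blast
qed

lemma exists_cycle_if_two_neighbours:
  assumes "finite W" "W \<noteq> {}" and no_loop: "\<And>x. \<not> adj E x x"
    and two_nbrs: "\<And>w. w \<in> W \<Longrightarrow> \<exists>a\<in>W. \<exists>b\<in>W. a \<noteq> b \<and> adj E w a \<and> adj E w b"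
  shows "\<exists>xs. set xs \<subseteq> W \<and> is_cycle E xs"
proof -
  obtain w where "w \<in> W" using assms(2) by auto
  then obtain xs where xs: "is_path E xs" "set xs \<subseteq> W"
    and closed: "\<And>c. c \<in> W \<Longrightarrow> adj E (last xs) c \<Longrightarrow> c \<in> set xs"
    using exists_maximal_path assms(1) by metis
  define k where "k = length xs"
  have last_xs: "last xs = xs ! (k - 1)"
    using xs(1) by (simp add: k_def is_path_def last_conv_nth)
  obtain a b where "a \<in> W" "b \<in> W" "a \<noteq> b" "adj E (last xs) a" "adj E (last xs) b"
    using two_nbrs xs(1,2) last_in_set[of xs] by (metis is_path_def subsetD)
  txt \<open>One of the two neighbours of the endpoint is not its predecessor on the path.\<close>
  then obtain j where j: "j < k" "adj E (last xs) (xs ! j)" "j \<noteq> k - 2"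
    using closed by (metis in_set_conv_nth k_def)
  have "j \<noteq> k - 1" using j(2) no_loop last_xs by metis
  then have "j + 3 \<le> k" using j(1,3) by linarith
  then have "is_cycle E (drop j xs)" using is_cycle_drop xs(1) j(2) k_def by metis
  moreover have "set (drop j xs) \<subseteq> W" using xs(2) set_drop_subset by fastforce
  ultimately show ?thesis by blast
qed

definition dmin :: "'a set set \<Rightarrow> 'a set \<Rightarrow> nat" where
  "dmin E e = Min (deg E ` e)"

definition dmax :: "'a set set \<Rightarrow> 'a set \<Rightarrow> nat" where
  "dmax E e = Max (deg E ` e)"

lemma dmin_doubleton [simp]: "dmin E {u, v} = min (deg E u) (deg E v)"
  and dmax_doubleton [simp]: "dmax E {u, v} = max (deg E u) (deg E v)"
  by (simp_all add: dmin_def dmax_def)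

locale tree_graph =
  fixes V :: "'a set" and E :: "'a set set"
  assumes is_tree: "is_tree V E"
begin

lemma finite_V: "finite V"
  using is_tree by (simp add: is_tree_def simple_graph_def)

lemma connected: "u \<in> V \<Longrightarrow> v \<in> V \<Longrightarrow> (adj E)\<^sup>*\<^sup>* u v"
  using is_tree by (simp add: is_tree_def connected_graph_def)

lemma no_cycle: "set xs \<subseteq> V \<Longrightarrow> \<not> is_cycle E xs"
  using is_tree by (simp add: is_tree_def)

lemma edgeE:
  assumes "e \<in> E"
  obtains u v where "e = {u, v}" "u \<noteq> v" "u \<in> V" "v \<in> V"
  using is_tree assms by (auto simp: is_tree_def simple_graph_def)

lemma edges_subset_Pow: "E \<subseteq> Pow V"
proof
  fix e assume "e \<in> E"
  then show "e \<in> Pow V" by (rule edgeE) auto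
qed

lemma finite_E: "finite E"
  using finite_subset[OF edges_subset_Pow] finite_V by simp

lemma not_adj_self: "\<not> adj E x x"
proof
  assume "adj E x x"
  then have "{x} \<in> E" by (simp add: adj_def)
  then show False by (rule edgeE) (metis insertI1 insert_commute singletonD)
qed

lemma card_le_card_edges_meeting:
  assumes "S \<subseteq> V" "S \<noteq> V"
  shows "card S \<le> card {e\<in>E. e \<inter> S \<noteq> {}}"
proof -
  have "finite S" using assms finite_V finite_subset by blast
  then show ?thesis using assms
  proof (induction S rule: finite_psubset_induct)
    case (psubset S)
    show ?case
    proof (cases "S = {}")
      case False
      then obtain u where u: "u \<in> S" by auto
      obtain v where v: "v \<in> V" "v \<notin> S" using psubset.prems by auto
      have "(adj E)\<^sup>*\<^sup>* u v" using connected u v psubset.prems(1) by blast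
      from rtranclp_exits_set[OF this u v(2)]
      obtain a b where ab: "adj E a b" "a \<in> S" "b \<notin> S" by blast
      let ?F = "{e\<in>E. e \<inter> (S - {a}) \<noteq> {}}"
      have "S - {a} \<subset> S" "S - {a} \<subseteq> V" "S - {a} \<noteq> V"
        using ab(2) psubset.prems(1) v by auto
      note IH = psubset.IH[OF this]
      have "{a, b} \<in> E" "{a, b} \<notin> ?F" using ab by (auto simp: adj_def)
      then have "insert {a, b} ?F \<subseteq> {e\<in>E. e \<inter> S \<noteq> {}}" using ab(2) by auto
      then have "card (insert {a, b} ?F) \<le> card {e\<in>E. e \<inter> S \<noteq> {}}"
        using finite_E by (intro card_mono) auto
      moreover have "card (insert {a, b} ?F) = Suc (card ?F)"
        using \<open>{a, b} \<notin> ?F\<close> finite_E by simp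
      moreover have "card S = Suc (card (S - {a}))"
        using ab(2) psubset.hyps by (metis card_Suc_Diff1)
      ultimately show ?thesis using IH by linarith
    qed simp
  qed
qed

lemma two_neighbours_within:
  assumes "w \<in> W" "2 \<le> card {e\<in>E. e \<subseteq> W \<and> w \<in> e}"
  shows "\<exists>a\<in>W. \<exists>b\<in>W. a \<noteq> b \<and> adj E w a \<and> adj E w b"
proof -
  let ?X = "{e\<in>E. e \<subseteq> W \<and> w \<in> e}"
  have "\<not> card ?X \<le> Suc 0" using assms(2) by simp
  then obtain e1 e2 where e12: "e1 \<in> ?X" "e2 \<in> ?X" "e1 \<noteq> e2"
    using card_le_Suc0_iff_eq[of ?X] finite_E by auto
  have other_end: "\<exists>a. e = {w, a} \<and> a \<in> W" if "e \<in> ?X" for e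
  proof -
    from that have "e \<in> E" by simp
    then obtain u v where "e = {u, v}" by (rule edgeE)
    then show ?thesis using that by (cases "w = u") auto
  qed
  obtain a where "e1 = {w, a}" "a \<in> W" using other_end[OF e12(1)] by blast
  moreover obtain b where "e2 = {w, b}" "b \<in> W" using other_end[OF e12(2)] by blast
  ultimately show ?thesis using e12 by (auto simp: adj_def)
qed

lemma card_edges_within_le:
  "card {e\<in>E. e \<subseteq> W} \<le> card {e\<in>E. e \<subseteq> W - {w}} + card {e\<in>E. e \<subseteq> W \<and> w \<in> e}"
proof -
  have "{e\<in>E. e \<subseteq> W} \<subseteq> {e\<in>E. e \<subseteq> W - {w}} \<union> {e\<in>E. e \<subseteq> W \<and> w \<in> e}" by auto
  then have "card {e\<in>E. e \<subseteq> W} \<le> card ({e\<in>E. e \<subseteq> W - {w}} \<union> {e\<in>E. e \<subseteq> W \<and> w \<in> e})"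
    using finite_E by (intro card_mono) auto
  also have "\<dots> \<le> card {e\<in>E. e \<subseteq> W - {w}} + card {e\<in>E. e \<subseteq> W \<and> w \<in> e}"
    by (rule card_Un_le)
  finally show ?thesis .
qed

lemma card_edges_within_less:
  assumes "W \<subseteq> V" "W \<noteq> {}"
  shows "card {e\<in>E. e \<subseteq> W} < card W"
proof -
  have "finite W" using assms finite_V finite_subset by blast
  then show ?thesis using assms
  proof (induction W rule: finite_psubset_induct)
    case (psubset W)
    show ?case
    proof (cases "\<exists>w\<in>W. card {e\<in>E. e \<subseteq> W \<and> w \<in> e} \<le> 1")
      case True
      then obtain w where w: "w \<in> W" "card {e\<in>E. e \<subseteq> W \<and> w \<in> e} \<le> 1" by blast
      show ?thesis
      proof (cases "W = {w}")
        case True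
        have "\<not> e \<subseteq> {w}" if "e \<in> E" for e
          using that by (rule edgeE) auto
        then have "{e\<in>E. e \<subseteq> W} = {}" using True by auto
        then show ?thesis using True by simp
      next
        case False
        have "W - {w} \<subset> W" "W - {w} \<subseteq> V" "W - {w} \<noteq> {}"
          using w(1) False psubset.prems(1) by auto
        note IH = psubset.IH[OF this]
        have "card {e\<in>E. e \<subseteq> W} < card (W - {w}) + 1"
          using card_edges_within_le[of W w] IH w(2) by linarith
        also have "\<dots> = card W" using w(1) psubset.hyps by (metis Suc_eq_plus1 card_Suc_Diff1)
        finally show ?thesis .
      qed
    next
      case False
      have "\<exists>a\<in>W. \<exists>b\<in>W. a \<noteq> b \<and> adj E w a \<and> adj E w b" if "w \<in> W" for w
        using False that by (intro two_neighbours_within) auto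
      from exists_cycle_if_two_neighbours[OF psubset.hyps psubset.prems(2) not_adj_self this]
      obtain xs where "set xs \<subseteq> W" "is_cycle E xs" by blast
      then show ?thesis using no_cycle psubset.prems(1) by blast
    qed
  qed
qed

lemma card_E: "card E + 1 = card V"
proof -
  have "V \<noteq> {}" using is_tree by (simp add: is_tree_def connected_graph_def)
  then obtain v where v: "v \<in> V" by blast
  have "{e\<in>E. e \<subseteq> V} = E" using edges_subset_Pow by auto
  then have "card E < card V" using card_edges_within_less[of V] \<open>V \<noteq> {}\<close> by simp
  moreover have "card (V - {v}) \<le> card {e\<in>E. e \<inter> (V - {v}) \<noteq> {}}"
    using v by (intro card_le_card_edges_meeting) auto
  moreover have "card {e\<in>E. e \<inter> (V - {v}) \<noteq> {}} \<le> card E"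
    using finite_E by (intro card_mono) auto
  moreover have "card (V - {v}) + 1 = card V"
    using v finite_V by (metis Suc_eq_plus1 card_Suc_Diff1)
  ultimately show ?thesis by linarith
qed

lemma deg_ge_1:
  assumes "v \<in> V" "2 \<le> card V"
  shows "1 \<le> deg E v"
proof -
  have "{v} \<noteq> V" using assms(2) by auto
  then have "card {v} \<le> card {e\<in>E. e \<inter> {v} \<noteq> {}}"
    using assms(1) card_le_card_edges_meeting by blast
  then show ?thesis by (simp add: deg_def)
qed

lemma medges_eq_card:
  assumes "i \<le> j"
  shows "medges E i j = card {e\<in>E. dmin E e = i \<and> dmax E e = j}"
proof -
  have "{e\<in>E. \<exists>u v. e = {u, v} \<and> deg E u = i \<and> deg E v = j} = {e\<in>E. dmin E e = i \<and> dmax E e = j}"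
  proof (rule Collect_cong, rule iffI)
    fix e assume "e \<in> E \<and> (\<exists>u v. e = {u, v} \<and> deg E u = i \<and> deg E v = j)"
    then obtain u v where "e \<in> E" "e = {u, v}" "deg E u = i" "deg E v = j" by blast
    then show "e \<in> E \<and> dmin E e = i \<and> dmax E e = j" using assms by simp
  next
    fix e assume e: "e \<in> E \<and> dmin E e = i \<and> dmax E e = j"
    then have "e \<in> E" by simp
    then obtain u v where uv: "e = {u, v}" by (rule edgeE)
    show "e \<in> E \<and> (\<exists>u v. e = {u, v} \<and> deg E u = i \<and> deg E v = j)"
    proof (cases "deg E u \<le> deg E v")
      case True
      then have "e = {u, v} \<and> deg E u = i \<and> deg E v = j" using e uv by auto
      then show ?thesis using e by blast
    next
      case False
      then have "e = {v, u} \<and> deg E v = i \<and> deg E u = j" using e uv by auto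
      then show ?thesis using e by blast
    qed
  qed
  then show ?thesis by (simp add: medges_def)
qed

lemma handshake:
  "i * nvert V E i = (\<Sum>e\<in>E. of_bool (dmin E e = i) + of_bool (dmax E e = i))"
proof -
  let ?Vi = "{v\<in>V. deg E v = i}"
  have "i * nvert V E i = (\<Sum>v\<in>?Vi. deg E v)" by (simp add: nvert_def)
  also have "\<dots> = (\<Sum>v\<in>?Vi. \<Sum>e\<in>E. of_bool (v \<in> e))"
    using finite_E by (simp add: deg_def Int_def)
  also have "\<dots> = (\<Sum>e\<in>E. \<Sum>v\<in>?Vi. of_bool (v \<in> e))" by (rule sum.swap)
  also have "\<dots> = (\<Sum>e\<in>E. of_bool (dmin E e = i) + of_bool (dmax E e = i))"
  proof (rule sum.cong[OF refl])
    fix e assume "e \<in> E"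
    then obtain a b where ab: "e = {a, b}" "a \<noteq> b" "a \<in> V" "b \<in> V" by (rule edgeE)
    have "(\<Sum>v\<in>?Vi. of_bool (v \<in> e)) = card {v\<in>?Vi. v \<in> e}"
      using finite_V by (simp add: Int_def)
    also have "{v\<in>?Vi. v \<in> e}
        = (if deg E a = i then {a} else {}) \<union> (if deg E b = i then {b} else {})"
      using ab by auto
    also have "card \<dots> = of_bool (deg E a = i) + of_bool (deg E b = i)"
      using ab by auto
    also have "\<dots> = of_bool (dmin E e = i) + of_bool (dmax E e = i)"
      using ab by (auto simp: min_def max_def)
    finally show "(\<Sum>v\<in>?Vi. of_bool (v \<in> e))
        = of_bool (dmin E e = i) + (of_bool (dmax E e = i) :: nat)" .
  qed
  finally show ?thesis .
qed

lemma card_deg_le_le_card_edges: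
  assumes "{v\<in>V. deg E v \<le> k} \<noteq> V"
  shows "card {v\<in>V. deg E v \<le> k} \<le> card {e\<in>E. dmin E e \<le> k}"
proof -
  have "card {v\<in>V. deg E v \<le> k} \<le> card {e\<in>E. e \<inter> {v\<in>V. deg E v \<le> k} \<noteq> {}}"
    using assms by (intro card_le_card_edges_meeting) auto
  also have "{e\<in>E. e \<inter> {v\<in>V. deg E v \<le> k} \<noteq> {}} = {e\<in>E. dmin E e \<le> k}"
  proof (rule Collect_cong)
    fix e
    show "e \<in> E \<and> e \<inter> {v\<in>V. deg E v \<le> k} \<noteq> {} \<longleftrightarrow> e \<in> E \<and> dmin E e \<le> k"
    proof (cases "e \<in> E")
      case True
      then obtain a b where "e = {a, b}" "a \<in> V" "b \<in> V" by (rule edgeE)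
      then show ?thesis by auto
    qed simp
  qed
  finally show ?thesis .
qed

lemma medges_diag_less_nvert:
  assumes "0 < nvert V E k"
  shows "medges E k k < nvert V E k"
proof -
  let ?W = "{v\<in>V. deg E v = k}"
  have "?W \<noteq> {}" using assms by (auto simp: nvert_def card_gt_0_iff)
  then have "card {e\<in>E. e \<subseteq> ?W} < card ?W" by (intro card_edges_within_less) auto
  moreover have "{e\<in>E. e \<subseteq> ?W} = {e\<in>E. dmin E e = k \<and> dmax E e = k}"
  proof (rule Collect_cong)
    fix e
    show "e \<in> E \<and> e \<subseteq> ?W \<longleftrightarrow> e \<in> E \<and> dmin E e = k \<and> dmax E e = k"
    proof (cases "e \<in> E")
      case True
      then obtain a b where "e = {a, b}" "a \<in> V" "b \<in> V" by (rule edgeE)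
      then show ?thesis by (auto simp: min_def max_def)
    qed simp
  qed
  ultimately show ?thesis by (simp add: medges_eq_card nvert_def)
qed

end

lemma sqrt_bounds:
  "14142 / 10000 < sqrt 2" "sqrt 2 < 14143 / 10000"
  "22360 / 10000 < sqrt 5" "sqrt 5 < 22361 / 10000"
  "31622 / 10000 < sqrt 10" "sqrt 10 < 31623 / 10000" "36055 / 10000 < sqrt 13"
  by (rule real_less_rsqrt real_less_lsqrt; simp add: power2_eq_square)+

text \<open>5 + 5 sqrt 5 + (n - 9) sqrt 2 is the index of the trees in Omega(n), see SO_red_Omega.\<close>

lemma Omega_value_lt_of_deg_4_counts:
  fixes n m12 m13 m14 m22 m23 m24 m33 m34 m44 :: real
  assumes n: "n = 1 + m12 + m13 + m14 + m22 + m23 + m24 + m33 + m34 + m44"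
    and nonneg: "0 \<le> m13" "0 \<le> m14" "0 \<le> m23" "0 \<le> m33" "0 \<le> m34" "0 \<le> m44"
    and leaves: "m12 \<le> m23 + m24" and deg_4: "4 \<le> m14 + m24 + m34 + 2 * m44"
  shows "5 + 5 * sqrt 5 + (n - 9) * sqrt 2 < m12 + 2 * m13 + 3 * m14 + sqrt 2 * m22 + sqrt 5 * m23
    + sqrt 10 * m24 + 2 * sqrt 2 * m33 + sqrt 13 * m34 + 3 * sqrt 2 * m44" (is "?L < ?R")
proof -
  let ?s = "sqrt 2" and ?r = "sqrt 5" and ?q = "sqrt 10" and ?t = "sqrt 13"
  have "?R - ?L = (?q - 2 * ?s + 1) * (m14 + m24 + m34 + 2 * m44 - 4) + (?r - 2 * ?s + 1) * m23
      + (2 - ?s) * m13 + (2 + ?s - ?q) * m14 + ?s * m33 + (?t - ?q + ?s - 1) * m34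
      + (6 * ?s - 2 * ?q - 2) * m44 + (?s - 1) * (m23 + m24 - m12) + (4 * ?q - 1 - 5 * ?r)"
    unfolding n by (simp add: algebra_simps)
  moreover have "0 \<le> (?q - 2 * ?s + 1) * (m14 + m24 + m34 + 2 * m44 - 4)"
    "0 \<le> (?r - 2 * ?s + 1) * m23" "0 \<le> (2 - ?s) * m13" "0 \<le> (2 + ?s - ?q) * m14"
    "0 \<le> ?s * m33" "0 \<le> (?t - ?q + ?s - 1) * m34" "0 \<le> (6 * ?s - 2 * ?q - 2) * m44"
    "0 \<le> (?s - 1) * (m23 + m24 - m12)"
    using sqrt_bounds nonneg leaves deg_4 by (auto intro!: mult_nonneg_nonneg; linarith)+
  moreover have "0 < 4 * ?q - 1 - 5 * ?r" using sqrt_bounds by linarith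
  ultimately show ?thesis by linarith
qed

lemma Omega_value_lt_of_deg_3_counts:
  fixes n k m12 m13 m22 m23 m33 :: real
  assumes n: "n = 1 + m12 + m13 + m22 + m23 + m33"
    and "3 \<le> k" "0 \<le> m13" "m12 \<le> m23"
    and leaves: "m12 + m13 = 2 + k" and deg_3: "3 * k = m13 + m23 + 2 * m33"
    and not_Omega: "\<not> (k = 3 \<and> m13 = 0 \<and> m23 = m12)"
  shows "5 + 5 * sqrt 5 + (n - 9) * sqrt 2
    < m12 + 2 * m13 + sqrt 2 * m22 + sqrt 5 * m23 + 2 * sqrt 2 * m33" (is "?L < ?R")
proof -
  let ?s = "sqrt 2" and ?r = "sqrt 5"
  have m12_eq: "m12 = 2 + k - m13" and m33_eq: "m33 = (3 * k - m13 - m23) / 2"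
    using leaves deg_3 by simp_all
  let ?a = "(?r - ?s + 1) * (k - 3)" and ?b = "(1 - ?r + ?s) * m13"
    and ?c = "(?r - 3 / 2 * ?s) * (m23 - m12)"
  have "k > 3 \<or> m13 > 0 \<or> m23 > m12" using not_Omega assms(2-4) by auto
  then have "0 < ?a \<or> 0 < ?b \<or> 0 < ?c" using sqrt_bounds by (auto intro!: mult_pos_pos)
  moreover have "0 \<le> ?a" "0 \<le> ?b" "0 \<le> ?c"
    using sqrt_bounds assms(2-4) by (auto intro!: mult_nonneg_nonneg; linarith)+
  moreover have "?R - ?L = ?a + ?b + ?c"
    unfolding n m33_eq unfolding m12_eq by (simp add: field_simps)
  ultimately show ?thesis by linarith
qed

text \<open>For a tree of maximum degree 3 with k = n_3, the triple (k, m_{3,3}, m_{1,3}) determines the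
  m-vector; the thirteen feasible triples correspond to A_1, ..., A_13.\<close>

lemma deg_3_count_cases:
  fixes k m12 m13 m22 m23 m33 n2 :: nat
  assumes "m22 < n2" "2 * n2 = m12 + 2 * m22 + m23" "0 < k \<Longrightarrow> m12 \<le> m23"
    and "m12 + m13 = 2 + k" "3 * k = m13 + m23 + 2 * m33" "k \<le> 2"
  shows "(k, m33, m13) \<in> {(0, 0, 0), (1, 0, 0), (1, 0, 1), (1, 0, 2), (2, 0, 0), (2, 0, 1),
    (2, 0, 2), (2, 0, 3), (2, 0, 4), (2, 1, 0), (2, 1, 1), (2, 1, 2), (2, 1, 3)}"
proof -
  have "k = 0 \<or> k = 1 \<or> k = 2" using assms(6) by arith
  then show ?thesis
  proof (elim disjE)
    assume "k = 0"
    then show ?thesis using assms(5) by simp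
  next
    assume "k = 1"
    with assms(1-5) have "m33 = 0" "m13 \<le> 2" by linarith+
    then have "m13 = 0 \<or> m13 = 1 \<or> m13 = 2" by arith
    then show ?thesis using \<open>k = 1\<close> \<open>m33 = 0\<close> by auto
  next
    assume "k = 2"
    with assms(1-5) have "m33 \<le> 1" "m13 + m33 \<le> 4" by linarith+
    then have "m33 = 0 \<and> m13 \<le> 4 \<or> m33 = 1 \<and> m13 \<le> 3" by arith
    then have "m33 = 0 \<and> (m13 = 0 \<or> m13 = 1 \<or> m13 = 2 \<or> m13 = 3 \<or> m13 = 4)
      \<or> m33 = 1 \<and> (m13 = 0 \<or> m13 = 1 \<or> m13 = 2 \<or> m13 = 3)" by arith
    then show ?thesis using \<open>k = 2\<close> by auto
  qed
qed

definition SO_red_mvec :: "nat \<times> nat \<times> nat \<times> nat \<times> nat \<Rightarrow> real" where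
  "SO_red_mvec = (\<lambda>(m33, m23, m12, m13, m22).
     2 * sqrt 2 * m33 + sqrt 5 * m23 + m12 + 2 * m13 + sqrt 2 * m22)"

lemma avec_image: "avec n ` {1..13} = set (map (avec n) [1..<14])"
  by (simp add: atLeastAtMost_upt)

locale chem_tree = tree_graph +
  assumes deg_le_4: "v \<in> V \<Longrightarrow> deg E v \<le> 4"
    and card_V_ge_3: "3 \<le> card V"
begin

abbreviation "m \<equiv> medges E"
abbreviation "nv \<equiv> nvert V E"

lemma edge_degrees:
  assumes "e \<in> E"
  shows "1 \<le> dmin E e" "dmin E e \<le> dmax E e" "dmax E e \<le> 4"
proof -
  obtain u v where "e = {u, v}" "u \<in> V" "v \<in> V" using assms by (rule edgeE)
  then show "1 \<le> dmin E e" "dmin E e \<le> dmax E e" "dmax E e \<le> 4"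
    using deg_ge_1 deg_le_4 card_V_ge_3 by auto
qed

lemma sum_edges_by_degrees:
  "(\<Sum>e\<in>E. F (dmin E e) (dmax E e) :: 'b :: comm_semiring_1) =
     of_nat (m 1 1) * F 1 1 + of_nat (m 1 2) * F 1 2 + of_nat (m 1 3) * F 1 3
   + of_nat (m 1 4) * F 1 4 + of_nat (m 2 2) * F 2 2 + of_nat (m 2 3) * F 2 3
   + of_nat (m 2 4) * F 2 4 + of_nat (m 3 3) * F 3 3 + of_nat (m 3 4) * F 3 4
   + of_nat (m 4 4) * F 4 4"
proof -
  let ?C = "SIGMA i:{1..4}. {i..4::nat}"
  let ?d = "\<lambda>e. (dmin E e, dmax E e)"
  have range: "?d ` E \<subseteq> ?C" using edge_degrees by fastforce
  have "(\<Sum>e\<in>E. F (dmin E e) (dmax E e)) = (\<Sum>p\<in>?C. \<Sum>e\<in>{e\<in>E. ?d e = p}. F (dmin E e) (dmax E e))"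
    using sum.group[OF finite_E _ range, of "\<lambda>e. F (dmin E e) (dmax E e)"] by simp
  also have "\<dots> = (\<Sum>(i, j)\<in>?C. of_nat (m i j) * F i j)"
  proof (rule sum.cong[OF refl])
    fix p assume "p \<in> ?C"
    then obtain i j where ij: "p = (i, j)" "i \<le> j" by auto
    have "(\<Sum>e\<in>{e\<in>E. ?d e = p}. F (dmin E e) (dmax E e))
        = (\<Sum>e\<in>{e\<in>E. dmin E e = i \<and> dmax E e = j}. F i j)"
      using ij(1) by (intro sum.cong) auto
    then show "(\<Sum>e\<in>{e\<in>E. ?d e = p}. F (dmin E e) (dmax E e))
        = (case p of (i, j) \<Rightarrow> of_nat (m i j) * F i j)"
      using ij by (simp add: medges_eq_card)
  qed
  also have "\<dots> = (\<Sum>i\<in>{1..4}. \<Sum>j\<in>{i..4}. of_nat (m i j) * F i j)"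
    by (simp add: sum.Sigma)
  finally show ?thesis by (simp add: sum.atLeast_Suc_atMost numeral_eq_Suc add_ac)
qed

lemma card_V_by_degrees: "card V = nv 1 + nv 2 + nv 3 + nv 4"
proof -
  have "deg E ` V \<subseteq> {1..4}" using deg_ge_1 deg_le_4 card_V_ge_3 by force
  then have "card V = (\<Sum>i\<in>{1..4}. card {v\<in>V. deg E v = i})"
    using sum.group[OF finite_V finite_atLeastAtMost, where g = "deg E" and h = "\<lambda>_. 1::nat"]
    by simp
  then show ?thesis by (simp add: nvert_def sum.atLeast_Suc_atMost numeral_eq_Suc add_ac)
qed

lemma card_V_by_edges:
  "card V = Suc (m 1 1 + m 1 2 + m 1 3 + m 1 4 + m 2 2 + m 2 3 + m 2 4 + m 3 3 + m 3 4 + m 4 4)"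
  using card_E sum_edges_by_degrees[of "\<lambda>_ _. 1::nat"] by simp

lemma handshake_by_degrees:
  "nv 1 = 2 * m 1 1 + m 1 2 + m 1 3 + m 1 4"
  "2 * nv 2 = m 1 2 + 2 * m 2 2 + m 2 3 + m 2 4"
  "3 * nv 3 = m 1 3 + m 2 3 + 2 * m 3 3 + m 3 4"
  "4 * nv 4 = m 1 4 + m 2 4 + m 3 4 + 2 * m 4 4"
  using handshake[of 1] handshake[of 2] handshake[of 3] handshake[of 4]
  unfolding sum_edges_by_degrees[where F="\<lambda>a b. of_bool (a = _) + of_bool (b = _)"]
  by simp_all

lemma nv_1_eq: "nv 1 = 2 + nv 3 + 2 * nv 4"
  using handshake_by_degrees card_V_by_edges card_V_by_degrees by linarith

lemma m_1_1_eq_0: "m 1 1 = 0"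
proof -
  have "{v\<in>V. deg E v \<le> 1} = {v\<in>V. deg E v = 1}" using deg_ge_1 card_V_ge_3 by force
  moreover have "nv 1 < card V" using nv_1_eq card_V_by_degrees card_V_ge_3 by linarith
  ultimately have "nv 1 \<le> card {e\<in>E. dmin E e \<le> 1}"
    using card_deg_le_le_card_edges[of 1] by (fastforce simp: nvert_def)
  also have "\<dots> = m 1 1 + m 1 2 + m 1 3 + m 1 4"
    using sum_edges_by_degrees[of "\<lambda>a b. of_bool (a \<le> 1) :: nat"] finite_E by (simp add: Int_def)
  finally show ?thesis using handshake_by_degrees(1) by linarith
qed

lemma m_1_2_le:
  assumes "0 < nv 3 + nv 4"
  shows "m 1 2 \<le> m 2 3 + m 2 4"
proof -
  have "{v\<in>V. deg E v \<le> 2} = {v\<in>V. deg E v = 1} \<union> {v\<in>V. deg E v = 2}"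
    using deg_ge_1 card_V_ge_3 by force
  then have "card {v\<in>V. deg E v \<le> 2} = nv 1 + nv 2"
    using finite_V by (simp add: nvert_def card_Un_disjoint disjoint_iff)
  moreover have "nv 1 + nv 2 < card V" using assms card_V_by_degrees by linarith
  ultimately have "nv 1 + nv 2 \<le> card {e\<in>E. dmin E e \<le> 2}"
    using card_deg_le_le_card_edges[of 2] by fastforce
  also have "\<dots> = m 1 1 + m 1 2 + m 1 3 + m 1 4 + m 2 2 + m 2 3 + m 2 4"
    using sum_edges_by_degrees[of "\<lambda>a b. of_bool (a \<le> 2) :: nat"] finite_E by (simp add: Int_def)
  finally show ?thesis using handshake_by_degrees(1,2) by linarith
qed

lemma SO_red_by_degrees:
  "SO_red V E = real (m 1 2) + 2 * real (m 1 3) + 3 * real (m 1 4) + sqrt 2 * real (m 2 2)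
     + sqrt 5 * real (m 2 3) + sqrt 10 * real (m 2 4) + 2 * sqrt 2 * real (m 3 3)
     + sqrt 13 * real (m 3 4) + 3 * sqrt 2 * real (m 4 4)"
proof -
  have "sqrt 8 = 2 * sqrt 2" "sqrt 18 = 3 * sqrt 2"
    using real_sqrt_mult[of 4 2] real_sqrt_mult[of 9 2] by simp_all
  then show ?thesis
    unfolding SO_red_def
    using sum_edges_by_degrees[of "\<lambda>i j. sqrt ((real j - 1)\<^sup>2 + (real i - 1)\<^sup>2)"]
    by (simp add: dmin_def dmax_def power2_eq_square algebra_simps)
qed

lemma medges_deg_4_eq_0:
  assumes "nv 4 = 0"
  shows "m 1 4 = 0" "m 2 4 = 0" "m 3 4 = 0" "m 4 4 = 0"
  using handshake_by_degrees(4) assms by simp_all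

lemma handshake_if_no_deg_4:
  assumes "nv 4 = 0"
  shows "m 1 2 + m 1 3 = 2 + nv 3" "2 * nv 2 = m 1 2 + 2 * m 2 2 + m 2 3"
    "3 * nv 3 = m 1 3 + m 2 3 + 2 * m 3 3"
  using handshake_by_degrees nv_1_eq m_1_1_eq_0 medges_deg_4_eq_0[OF assms] assms by simp_all

lemma in_CT: "(V, E) \<in> CT (card V)"
  using is_tree deg_le_4 by (simp add: CT_def chemical_tree_def)

lemma SO_red_eq_SO_red_mvec:
  assumes "nv 4 = 0"
  shows "SO_red V E = SO_red_mvec (mvec E)"
proof -
  have "SO_red_mvec (mvec E) = 2 * sqrt 2 * real (m 3 3) + sqrt 5 * real (m 2 3)
      + real (m 1 2) + 2 * real (m 1 3) + sqrt 2 * real (m 2 2)"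
    by (simp add: SO_red_mvec_def mvec_def)
  then show ?thesis using SO_red_by_degrees medges_deg_4_eq_0[OF assms] by simp
qed

lemma maxdeg_le_3_iff: "maxdeg_le V E 3 \<longleftrightarrow> nv 4 = 0"
proof -
  have "deg E v \<le> 3 \<longleftrightarrow> deg E v \<noteq> 4" if "v \<in> V" for v using deg_le_4[OF that] by linarith
  then have "maxdeg_le V E 3 \<longleftrightarrow> {v\<in>V. deg E v = 4} = {}" by (auto simp: maxdeg_le_def)
  also have "\<dots> \<longleftrightarrow> nv 4 = 0" using finite_V by (simp add: nvert_def)
  finally show ?thesis .
qed

lemma real_card_V:
  "real (card V) = 1 + real (m 1 2) + real (m 1 3) + real (m 1 4) + real (m 2 2) + real (m 2 3)
     + real (m 2 4) + real (m 3 3) + real (m 3 4) + real (m 4 4)"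
  using card_V_by_edges m_1_1_eq_0 by simp

lemma Omega_value_lt_SO_red_if_deg_4:
  assumes "0 < nv 4"
  shows "5 + 5 * sqrt 5 + (real (card V) - 9) * sqrt 2 < SO_red V E"
proof -
  have "m 1 2 \<le> m 2 3 + m 2 4" using m_1_2_le assms by simp
  moreover have "4 \<le> m 1 4 + m 2 4 + m 3 4 + 2 * m 4 4"
    using handshake_by_degrees(4) assms by linarith
  ultimately show ?thesis
    unfolding SO_red_by_degrees
    by (intro Omega_value_lt_of_deg_4_counts[OF real_card_V]) (simp_all flip: of_nat_add)
qed

lemma Omega_value_lt_SO_red_if_three_deg_3:
  assumes deg_4: "nv 4 = 0" and "3 \<le> nv 3" and not_Omega: "(V, E) \<notin> Omega (card V)"
  shows "5 + 5 * sqrt 5 + (real (card V) - 9) * sqrt 2 < SO_red V E"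
proof -
  note m_4 = medges_deg_4_eq_0[OF deg_4]
  note counts = handshake_if_no_deg_4[OF deg_4]
  have not_Omega_counts: "\<not> (nv 3 = 3 \<and> m 1 3 = 0 \<and> m 2 3 = m 1 2)"
  proof
    assume "nv 3 = 3 \<and> m 1 3 = 0 \<and> m 2 3 = m 1 2"
    then have "nv 3 = 3" "nv 2 = card V - 8" "nv 1 = 5" "m 1 2 = 5" "m 2 3 = 5" "m 1 3 = 0"
      "m 3 3 = 2" "m 2 2 = card V - 13"
      using counts nv_1_eq deg_4 card_V_by_degrees by linarith+
    then have "(V, E) \<in> Omega (card V)" using in_CT unfolding Omega_def by simp
    then show False using not_Omega by contradiction
  qed
  have "m 1 2 \<le> m 2 3" using m_1_2_le m_4 assms(2) by simp
  have n: "real (card V)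
      = 1 + real (m 1 2) + real (m 1 3) + real (m 2 2) + real (m 2 3) + real (m 3 3)"
    using real_card_V m_4 by simp
  have SO: "SO_red V E = real (m 1 2) + 2 * real (m 1 3) + sqrt 2 * real (m 2 2)
      + sqrt 5 * real (m 2 3) + 2 * sqrt 2 * real (m 3 3)"
    using SO_red_by_degrees m_4 by simp
  show ?thesis
    unfolding SO using assms(2) counts not_Omega_counts \<open>m 1 2 \<le> m 2 3\<close>
    by (intro Omega_value_lt_of_deg_3_counts[OF n, where k = "real (nv 3)"])
      (simp_all flip: of_nat_add)
qed

lemma mvec_in_avec_image:
  assumes "13 \<le> card V" and deg_4: "nv 4 = 0" and "nv 3 \<le> 2"
  shows "mvec E \<in> avec (card V) ` {1..13}"
proof -
  note m_4 = medges_deg_4_eq_0[OF deg_4]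
  note counts = handshake_if_no_deg_4[OF deg_4]
  have "0 < nv 2" using assms card_V_by_degrees nv_1_eq by linarith
  then have "m 2 2 < nv 2" by (rule medges_diag_less_nvert)
  moreover have "0 < nv 3 \<Longrightarrow> m 1 2 \<le> m 2 3" using m_1_2_le m_4 deg_4 by simp
  ultimately have "(nv 3, m 3 3, m 1 3) \<in> {(0, 0, 0), (1, 0, 0), (1, 0, 1), (1, 0, 2), (2, 0, 0),
      (2, 0, 1), (2, 0, 2), (2, 0, 3), (2, 0, 4), (2, 1, 0), (2, 1, 1), (2, 1, 2), (2, 1, 3)}"
    using counts assms(3) by (intro deg_3_count_cases)
  moreover have "m 1 2 = 2 + nv 3 - m 1 3" using counts(1) by simp
  moreover have "m 2 3 = 3 * nv 3 - m 1 3 - 2 * m 3 3" using counts(3) by simp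
  moreover have "m 2 2 = card V - 1 - m 1 2 - m 1 3 - m 2 3 - m 3 3"
    using card_V_by_edges m_1_1_eq_0 m_4 by simp
  ultimately show ?thesis
    unfolding avec_image mvec_def
    by (elim insertE emptyE) (simp_all add: avec_def upt_rec)
qed

end

lemma chem_tree_if_CT:
  assumes "(V, E) \<in> CT n" "3 \<le> n"
  shows "chem_tree V E"
  using assms by unfold_locales (auto simp: CT_def chemical_tree_def)

lemma SO_red_Aset:
  assumes "(V, E) \<in> Aset n k" "3 \<le> n"
  shows "SO_red V E = SO_red_mvec (avec n k)"
proof -
  interpret chem_tree V E using assms by (intro chem_tree_if_CT) (auto simp: Aset_def)
  have "maxdeg_le V E 3" "mvec E = avec n k" using assms(1) by (simp_all add: Aset_def)
  then show ?thesis using SO_red_eq_SO_red_mvec maxdeg_le_3_iff by simp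
qed

lemma SO_red_Omega:
  assumes "(V, E) \<in> Omega n" "13 \<le> n"
  shows "SO_red V E = 5 + 5 * sqrt 5 + (real n - 9) * sqrt 2"
proof -
  have CT: "(V, E) \<in> CT n" using assms(1) by (simp add: Omega_def)
  interpret chem_tree V E using chem_tree_if_CT[OF CT] assms(2) by simp
  have "card V = n" using CT by (simp add: CT_def)
  have counts: "nv 3 = 3" "nv 2 = n - 8" "nv 1 = 5" "m 3 3 = 2" "m 2 3 = 5" "m 1 2 = 5" "m 1 3 = 0"
    "m 2 2 = n - 13"
    using assms(1) by (simp_all add: Omega_def)
  then have "nv 4 = 0" using card_V_by_degrees \<open>card V = n\<close> assms(2) by linarith
  then have "SO_red V E = SO_red_mvec (mvec E)" by (rule SO_red_eq_SO_red_mvec)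
  then show ?thesis
    using counts assms(2) by (simp add: SO_red_mvec_def mvec_def of_nat_diff algebra_simps)
qed

lemma Omega_value_lt_SO_red:
  assumes "(V, E) \<in> CT n" "13 \<le> n" and not_listed: "(V, E) \<notin> (\<Union>i\<in>{1..13}. Aset n i) \<union> Omega n"
  shows "5 + 5 * sqrt 5 + (real n - 9) * sqrt 2 < SO_red V E"
proof -
  interpret chem_tree V E using chem_tree_if_CT[OF assms(1)] assms(2) by simp
  have n: "n = card V" using assms(1) by (simp add: CT_def)
  consider "0 < nv 4" | "nv 4 = 0" "3 \<le> nv 3" | "nv 4 = 0" "nv 3 \<le> 2" by linarith
  then have "5 + 5 * sqrt 5 + (real (card V) - 9) * sqrt 2 < SO_red V E"
  proof cases
    case 1
    then show ?thesis by (rule Omega_value_lt_SO_red_if_deg_4)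
  next
    case 2
    moreover have "(V, E) \<notin> Omega (card V)" using not_listed n by simp
    ultimately show ?thesis by (intro Omega_value_lt_SO_red_if_three_deg_3)
  next
    case 3
    then obtain k where "k \<in> {1..13}" "mvec E = avec (card V) k"
      using mvec_in_avec_image assms(2) n by auto
    then have "(V, E) \<in> (\<Union>i\<in>{1..13}. Aset n i)"
      using assms(1) 3 maxdeg_le_3_iff n by (auto simp: Aset_def)
    then show ?thesis using not_listed by blast
  qed
  then show ?thesis using n by simp
qed

theorem theorem3p4:
  fixes n :: nat and V1 V2 V3 V4 V5 V6 V7 V8 V9 V10 V11 V12 V13 V14 V :: "'a set"
    and E1 E2 E3 E4 E5 E6 E7 E8 E9 E10 E11 E12 E13 E14 E :: "'a set set"
  assumes "n \<ge> 13"
    and "(V1, E1) \<in> Aset n 1" and "(V2, E2) \<in> Aset n 4" and "(V3, E3) \<in> Aset n 3"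
    and "(V4, E4) \<in> Aset n 2" and "(V5, E5) \<in> Aset n 13" and "(V6, E6) \<in> Aset n 12"
    and "(V7, E7) \<in> Aset n 11" and "(V8, E8) \<in> Aset n 10" and "(V9, E9) \<in> Aset n 9"
    and "(V10, E10) \<in> Aset n 8" and "(V11, E11) \<in> Aset n 7" and "(V12, E12) \<in> Aset n 6"
    and "(V13, E13) \<in> Aset n 5" and "(V14, E14) \<in> Omega n"
    and "(V, E) \<in> CT n"
    and "(V, E) \<notin> (\<Union>i\<in>{1..13}. Aset n i) \<union> Omega n"
  shows "SO_red V1 E1 < SO_red V2 E2 \<and> SO_red V2 E2 < SO_red V3 E3 \<and>
         SO_red V3 E3 < SO_red V4 E4 \<and> SO_red V4 E4 < SO_red V5 E5 \<and>
         SO_red V5 E5 < SO_red V6 E6 \<and> SO_red V6 E6 < SO_red V7 E7 \<and>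
         SO_red V7 E7 < SO_red V8 E8 \<and> SO_red V8 E8 < SO_red V9 E9 \<and>
         SO_red V9 E9 < SO_red V10 E10 \<and> SO_red V10 E10 < SO_red V11 E11 \<and>
         SO_red V11 E11 < SO_red V12 E12 \<and> SO_red V12 E12 < SO_red V13 E13 \<and>
         SO_red V13 E13 < SO_red V14 E14 \<and> SO_red V14 E14 < SO_red V E"
proof -
  have A: "SO_red V' E' = SO_red_mvec (avec n k)" if "(V', E') \<in> Aset n k"
    for V' :: "'a set" and E' k
    using SO_red_Aset[OF that] assms(1) by simp
  have "SO_red V14 E14 = 5 + 5 * sqrt 5 + (real n - 9) * sqrt 2"
    using SO_red_Omega assms(1,15) by blast
  moreover have "5 + 5 * sqrt 5 + (real n - 9) * sqrt 2 < SO_red V E"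
    using Omega_value_lt_SO_red assms(1,16,17) by blast
  ultimately show ?thesis
    unfolding A[OF assms(2)] A[OF assms(3)] A[OF assms(4)] A[OF assms(5)] A[OF assms(6)]
      A[OF assms(7)] A[OF assms(8)] A[OF assms(9)] A[OF assms(10)] A[OF assms(11)]
      A[OF assms(12)] A[OF assms(13)] A[OF assms(14)]
    using sqrt_bounds assms(1) by (simp add: SO_red_mvec_def avec_def algebra_simps)
qed

end
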